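(* Let $n\in\mathbb{N}_0$ and $v\in\mathbb{P}_n([0,1])$. For each $\mathrm{Z}\in\{\mathrm{I},\mathrm{II},\mathrm{III}\}$ there exists a unique $u^{\mathrm{Z}}\in\mathbb{P}^\perp_{n,n-1}(\widehat T)$ with $v=\gamma^{\mathrm{Z}}u^{\mathrm{Z}}$. Consequently the linear extension operator $\mathcal{E}^{\mathrm{Z}}:\mathbb{P}_n([0,1])\to\mathbb{P}^\perp_{n,n-1}(\widehat T)$, $\mathcal{E}^{\mathrm{Z}}v:=u^{\mathrm{Z}}$, is well defined.
   Context: $\widehat T$ is the triangle with vertices $(0,0),(1,0),(0,1)$. $\mathbb{P}^\perp_{0,-1}(\widehat T)=\mathbb{P}_0(\widehat T)$, and for $n\ge1$, $\mathbb{P}^\perp_{n,n-1}(\widehat T):=\{u\in\mathbb{P}_n(\widehat T):\int_{\widehat T}uv=0\ \forall v\in\mathbb{P}_{n-1}(\widehat T)\}$, where $\mathbb{P}_m$ denotes polynomials of total degree $\le m$. Restriction operators: $\gamma^{\mathrm{I}}u:=u(\cdot,0)$, $\gamma^{\mathrm{II}}u:=u(0,\cdot)$, $\gamma^{\mathrm{III}}u:=u(1-\cdot,\cdot)$ (functions on $[0,1]$). *)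

theory Defs
  imports "HOL-Analysis.Analysis"
begin

text \<open>Univariate polynomials of degree at most n (as real functions; restricted to [0,1] in use).\<close>
definition polys1 :: "nat \<Rightarrow> (real \<Rightarrow> real) set" where
  "polys1 n = {v. \<exists>a :: nat \<Rightarrow> real. \<forall>t. v t = (\<Sum>k\<le>n. a k * t ^ k)}"

definition polys2 :: "nat \<Rightarrow> (real \<times> real \<Rightarrow> real) set" where
  "polys2 n = {u. \<exists>c :: nat \<Rightarrow> nat \<Rightarrow> real.
      \<forall>x y. u (x, y) = (\<Sum>i\<le>n. \<Sum>j\<le>n - i. c i j * x ^ i * y ^ j)}"

definition Tref :: "(real \<times> real) set" where
  "Tref = {p. 0 \<le> fst p \<and> 0 \<le> snd p \<and> fst p + snd p \<le> 1}"

definition orth_polys :: "nat \<Rightarrow> (real \<times> real \<Rightarrow> real) set" where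
  "orth_polys n = (if n = 0 then polys2 0 else
     {u \<in> polys2 n. \<forall>w \<in> polys2 (n - 1). integral Tref (\<lambda>p. u p * w p) = 0})"

datatype edge = EI | EII | EIII

fun restr :: "edge \<Rightarrow> (real \<times> real \<Rightarrow> real) \<Rightarrow> real \<Rightarrow> real" where
  "restr EI u t = u (t, 0)"
| "restr EII u t = u (0, t)"
| "restr EIII u t = u (1 - t, t)"

end

theory Submission
  imports Defs
begin

text \<open>Let \<open>\<lambda>\<^sub>Z\<close> be the barycentric coordinate of \<open>T\<close> that vanishes on edge \<open>Z\<close>.
  Uniqueness: the difference \<open>d\<close> of two solutions vanishes on the edge, so \<open>d = \<lambda>\<^sub>Z R\<close>
  with \<open>R \<in> P\<^sub>n\<^sub>-\<^sub>1\<close>, and orthogonality gives \<open>\<integral>\<^sub>T \<lambda>\<^sub>Z R\<^sup>2 = \<integral>\<^sub>T d R = 0\<close>; as \<open>\<lambda>\<^sub>Z > 0\<close>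
  inside \<open>T\<close>, \<open>R = 0\<close>.
  Existence: extend \<open>v\<close> to some \<open>p \<in> P\<^sub>n\<close> and seek \<open>u = p - \<lambda>\<^sub>Z q\<close> with \<open>q \<in> P\<^sub>n\<^sub>-\<^sub>1\<close>,
  which keeps the trace on the edge. Orthogonality of \<open>u\<close> says that \<open>q\<close> represents
  \<open>w \<mapsto> \<integral>\<^sub>T p w\<close> with respect to the form \<open>(q, w) \<mapsto> \<integral>\<^sub>T \<lambda>\<^sub>Z q w\<close>, which by the same
  positivity argument is anisotropic on \<open>P\<^sub>n\<^sub>-\<^sub>1\<close>; such \<open>q\<close> exists in finite dimension.\<close>

section \<open>Finite spans and anisotropic forms\<close>

definition lin_span :: "('i \<Rightarrow> 'x \<Rightarrow> real) \<Rightarrow> 'i set \<Rightarrow> ('x \<Rightarrow> real) set" where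
  "lin_span g A = range (\<lambda>c z. \<Sum>i\<in>A. c i * g i z)"

lemma lin_span_empty [simp]: "lin_span g {} = {\<lambda>z. 0}"
  by (auto simp: lin_span_def)

lemma lin_span_lincomb:
  assumes "h \<in> lin_span g A" "k \<in> lin_span g A"
  shows "(\<lambda>z. \<alpha> * h z + \<beta> * k z) \<in> lin_span g A"
proof -
  obtain c d where "h = (\<lambda>z. \<Sum>i\<in>A. c i * g i z)" "k = (\<lambda>z. \<Sum>i\<in>A. d i * g i z)"
    using assms by (auto simp: lin_span_def)
  then have "(\<lambda>z. \<alpha> * h z + \<beta> * k z) = (\<lambda>z. \<Sum>i\<in>A. (\<alpha> * c i + \<beta> * d i) * g i z)"
    by (simp add: sum_distrib_left sum.distrib algebra_simps)
  then show ?thesis by (simp add: lin_span_def)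
qed

lemma lin_span_insert:
  assumes "finite A" "i \<notin> A"
  shows "h \<in> lin_span g (insert i A) \<longleftrightarrow> (\<exists>t. \<exists>s\<in>lin_span g A. h = (\<lambda>z. t * g i z + s z))"
proof
  assume "h \<in> lin_span g (insert i A)"
  then obtain c where "h = (\<lambda>z. \<Sum>j\<in>insert i A. c j * g j z)"
    by (auto simp: lin_span_def)
  then have "h = (\<lambda>z. c i * g i z + (\<Sum>j\<in>A. c j * g j z))"
    using assms by simp
  then show "\<exists>t. \<exists>s\<in>lin_span g A. h = (\<lambda>z. t * g i z + s z)"
    by (auto simp: lin_span_def)
next
  assume "\<exists>t. \<exists>s\<in>lin_span g A. h = (\<lambda>z. t * g i z + s z)"
  then obtain t c where h: "h = (\<lambda>z. t * g i z + (\<Sum>j\<in>A. c j * g j z))"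
    by (auto simp: lin_span_def)
  have "(\<Sum>j\<in>A. (c(i := t)) j * g j z) = (\<Sum>j\<in>A. c j * g j z)" for z
    using assms by (intro sum.cong) auto
  then have "h = (\<lambda>z. \<Sum>j\<in>insert i A. (c(i := t)) j * g j z)"
    using assms by (simp add: h)
  then show "h \<in> lin_span g (insert i A)" by (simp add: lin_span_def)
qed

locale anisotropic_form =
  fixes V :: "('x \<Rightarrow> real) set" and a :: "('x \<Rightarrow> real) \<Rightarrow> ('x \<Rightarrow> real) \<Rightarrow> real"
  assumes zero_mem: "(\<lambda>z. 0) \<in> V"
    and lincomb_mem: "\<And>g h \<alpha> \<beta>. g \<in> V \<Longrightarrow> h \<in> V \<Longrightarrow> (\<lambda>z. \<alpha> * g z + \<beta> * h z) \<in> V"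
    and lincomb_left: "\<And>g h k \<alpha> \<beta>. g \<in> V \<Longrightarrow> h \<in> V \<Longrightarrow> k \<in> V \<Longrightarrow>
      a (\<lambda>z. \<alpha> * g z + \<beta> * h z) k = \<alpha> * a g k + \<beta> * a h k"
    and sym: "\<And>g k. g \<in> V \<Longrightarrow> k \<in> V \<Longrightarrow> a g k = a k g"
    and anisotropic: "\<And>g. g \<in> V \<Longrightarrow> a g g = 0 \<Longrightarrow> g = (\<lambda>z. 0)"
begin

lemma lincomb_right:
  "g \<in> V \<Longrightarrow> h \<in> V \<Longrightarrow> k \<in> V \<Longrightarrow> a k (\<lambda>z. \<alpha> * g z + \<beta> * h z) = \<alpha> * a k g + \<beta> * a k h"
  by (simp add: sym[of k] lincomb_mem lincomb_left)

lemma zero_right: "k \<in> V \<Longrightarrow> a k (\<lambda>z. 0) = 0"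
  using lincomb_right[OF zero_mem zero_mem, of k 0 0] by simp

lemma lin_span_subset: "finite A \<Longrightarrow> g ` A \<subseteq> V \<Longrightarrow> lin_span g A \<subseteq> V"
proof (induction A rule: finite_induct)
  case (insert i A)
  show ?case
  proof
    fix h assume "h \<in> lin_span g (insert i A)"
    then obtain t s where "s \<in> lin_span g A" "h = (\<lambda>z. t * g i z + 1 * s z)"
      using insert.hyps by (auto simp: lin_span_insert)
    then show "h \<in> V"
      using insert lincomb_mem[of "g i" s t 1] by auto
  qed
qed (simp add: zero_mem)

lemma representer_on_insert:
  assumes "finite A" "i \<notin> A" "g i \<in> V" "lin_span g A \<subseteq> V" "q \<in> V"
    and f_lincomb: "\<And>h k \<alpha> \<beta>. h \<in> V \<Longrightarrow> k \<in> V \<Longrightarrow> f (\<lambda>z. \<alpha> * h z + \<beta> * k z) = \<alpha> * f h + \<beta> * f k"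
    and "a q (g i) = f (g i)" "\<forall>s\<in>lin_span g A. a q s = f s"
  shows "\<forall>h\<in>lin_span g (insert i A). a q h = f h"
proof
  fix h assume "h \<in> lin_span g (insert i A)"
  then obtain t s where s: "s \<in> lin_span g A" and h: "h = (\<lambda>z. t * g i z + 1 * s z)"
    using assms(1,2) by (auto simp: lin_span_insert)
  have sV: "s \<in> V" using s assms(4) by blast
  have "a q h = t * a q (g i) + 1 * a q s"
    unfolding h by (rule lincomb_right[OF assms(3) sV assms(5)])
  also have "\<dots> = t * f (g i) + 1 * f s" using assms(7,8) s by simp
  also have "\<dots> = f h" unfolding h by (rule f_lincomb[symmetric, OF assms(3) sV])
  finally show "a q h = f h" .
qed

text \<open>Gram--Schmidt in disguise: the induction step orthogonalises the new generator
  against the span of the old ones.\<close>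

lemma representer_exists:
  assumes "finite A" "g ` A \<subseteq> V"
    and f_lincomb: "\<And>h k \<alpha> \<beta>. h \<in> V \<Longrightarrow> k \<in> V \<Longrightarrow> f (\<lambda>z. \<alpha> * h z + \<beta> * k z) = \<alpha> * f h + \<beta> * f k"
  shows "\<exists>q\<in>lin_span g A. \<forall>h\<in>lin_span g A. a q h = f h"
  using assms
proof (induction A arbitrary: f rule: finite_induct)
  case empty
  have "f (\<lambda>z. 0) = 0" using empty.prems(2)[OF zero_mem zero_mem, of 0 0] by simp
  then show ?case using zero_right[OF zero_mem] by simp
next
  case (insert i A)
  let ?S = "lin_span g A" and ?w = "g i"
  have wV: "?w \<in> V" and AV: "g ` A \<subseteq> V" and SV: "?S \<subseteq> V"
    using insert.prems(1) lin_span_subset[OF insert.hyps(1)] by auto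
  obtain r where r: "r \<in> ?S" "\<forall>s\<in>?S. a r s = a ?w s"
    using insert.IH[of "a ?w"] AV lincomb_right[OF _ _ wV] by blast
  obtain q' where q': "q' \<in> ?S" "\<forall>s\<in>?S. a q' s = f s"
    using insert.IH[of f] AV insert.prems(2) by blast
  have rV: "r \<in> V" and q'V: "q' \<in> V" using r q' SV by auto
  define e where "e = (\<lambda>z. 1 * ?w z + (-1) * r z)"
  define \<tau> where "\<tau> = (f e - a q' e) / a e e"
  define q where "q = (\<lambda>z. 1 * q' z + \<tau> * e z)"
  have eV: "e \<in> V" unfolding e_def using lincomb_mem[OF wV rV] .
  have qV: "q \<in> V" unfolding q_def using lincomb_mem[OF q'V eV] .
  have e_orth: "a e s = 0" if "s \<in> ?S" for s
    using lincomb_left[OF wV rV, of s 1 "-1"] r(2) that SV unfolding e_def by auto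
  define s where "s = (\<lambda>z. 1 * q' z + (-\<tau>) * r z)"
  have "s \<in> ?S" unfolding s_def by (rule lin_span_lincomb[OF q'(1) r(1)])
  moreover have "q = (\<lambda>z. \<tau> * ?w z + s z)" by (auto simp: q_def e_def s_def algebra_simps)
  ultimately have q_span: "q \<in> lin_span g (insert i A)"
    using insert.hyps by (auto simp: lin_span_insert)
  have q_S: "\<forall>s\<in>?S. a q s = f s"
    using lincomb_left[OF q'V eV, of _ 1 \<tau>] SV q'(2) e_orth unfolding q_def by auto
  have q_e: "a q e = f e"
  proof (cases "a e e = 0")
    case True
    then have "e = (\<lambda>z. 0)" using anisotropic[OF eV] by blast
    then show ?thesis
      using zero_right[OF qV] insert.prems(2)[OF zero_mem zero_mem, of 0 0] by simp
  next
    case False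
    then show ?thesis
      using lincomb_left[OF q'V eV eV, of 1 \<tau>] unfolding q_def \<tau>_def by simp
  qed
  have "?w = (\<lambda>z. 1 * e z + 1 * r z)" by (auto simp: e_def)
  then have "a q ?w = f ?w"
    using lincomb_right[OF eV rV qV, of 1 1] insert.prems(2)[OF eV rV, of 1 1] q_S q_e r(1)
    by simp
  then show ?case
    using representer_on_insert[OF insert.hyps wV SV qV, where f=f] insert.prems(2) q_S q_span
    by blast
qed

end

section \<open>Bivariate polynomials\<close>

definition exps :: "nat \<Rightarrow> (nat \<times> nat) set" where
  "exps n = {p. fst p + snd p \<le> n}"

definition monom2 :: "nat \<times> nat \<Rightarrow> real \<times> real \<Rightarrow> real" where
  "monom2 p z = fst z ^ fst p * snd z ^ snd p"

lemma exps_Sigma: "exps n = Sigma {..n} (\<lambda>i. {..n - i})"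
  by (auto simp: exps_def)

lemma finite_exps [simp]: "finite (exps n)"
  by (simp add: exps_Sigma)

lemma polys2_eq_lin_span: "polys2 n = lin_span monom2 (exps n)"
proof -
  have sum_eq: "(\<Sum>i\<le>n. \<Sum>j\<le>n - i. c i j * x ^ i * y ^ j)
      = (\<Sum>p\<in>exps n. c (fst p) (snd p) * monom2 p (x, y))" for c and x y :: real
    unfolding exps_Sigma monom2_def by (subst sum.Sigma) (auto simp: case_prod_beta mult.assoc)
  show ?thesis
  proof
    show "polys2 n \<subseteq> lin_span monom2 (exps n)"
    proof
      fix u assume "u \<in> polys2 n"
      then obtain c where "\<And>x y. u (x, y) = (\<Sum>i\<le>n. \<Sum>j\<le>n - i. c i j * x ^ i * y ^ j)"
        by (auto simp: polys2_def)
      then have "u = (\<lambda>z. \<Sum>p\<in>exps n. c (fst p) (snd p) * monom2 p z)"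
        unfolding fun_eq_iff split_paired_All by (simp add: sum_eq)
      then show "u \<in> lin_span monom2 (exps n)" by (simp add: lin_span_def)
    qed
    show "lin_span monom2 (exps n) \<subseteq> polys2 n"
      by (auto simp: polys2_def lin_span_def sum_eq intro!: exI[of _ "\<lambda>i j. _ (i, j)"])
  qed
qed

lemma mem_polys2_iff: "u \<in> polys2 n \<longleftrightarrow> (\<exists>c. u = (\<lambda>z. \<Sum>p\<in>exps n. c p * monom2 p z))"
  by (auto simp: polys2_eq_lin_span lin_span_def)

lemma polys2_lincomb:
  "u \<in> polys2 n \<Longrightarrow> v \<in> polys2 n \<Longrightarrow> (\<lambda>z. \<alpha> * u z + \<beta> * v z) \<in> polys2 n"
  unfolding polys2_eq_lin_span by (rule lin_span_lincomb)

lemma polys2_mono: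
  assumes "u \<in> polys2 m" "m \<le> n"
  shows "u \<in> polys2 n"
proof -
  obtain c where c: "u = (\<lambda>z. \<Sum>p\<in>exps m. c p * monom2 p z)"
    using assms(1) by (auto simp: mem_polys2_iff)
  have "exps m \<subseteq> exps n" using assms(2) by (auto simp: exps_def)
  then have "(\<Sum>p\<in>exps n. (if p \<in> exps m then c p else 0) * monom2 p z)
      = (\<Sum>p\<in>exps m. c p * monom2 p z)" for z
    by (intro sum.mono_neutral_cong_right) auto
  then show ?thesis
    unfolding mem_polys2_iff c by (intro exI[of _ "\<lambda>p. if p \<in> exps m then c p else 0"]) simp
qed

lemma polys2_monom2: "monom2 p \<in> polys2 (fst p + snd p)"
proof -
  have "(\<Sum>q\<in>exps (fst p + snd p). (if q = p then 1 else 0) * monom2 q z) = monom2 p z" for z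
  proof -
    have "(\<Sum>q\<in>exps (fst p + snd p). (if q = p then 1 else 0) * monom2 q z)
        = (\<Sum>q\<in>exps (fst p + snd p). if q = p then monom2 q z else 0)"
      by (intro sum.cong) auto
    then show ?thesis by (simp add: sum.delta, simp add: exps_def)
  qed
  then show ?thesis
    unfolding mem_polys2_iff by (intro exI[of _ "\<lambda>q. if q = p then 1 else 0"]) auto
qed

lemma polys2_const: "(\<lambda>z. k) \<in> polys2 n"
proof -
  have "(\<lambda>z. k * monom2 (0, 0) z + 0 * monom2 (0, 0) z) \<in> polys2 n"
    using polys2_mono[OF polys2_monom2[of "(0, 0)"]] by (intro polys2_lincomb) auto
  then show ?thesis by (simp add: monom2_def)
qed

lemma polys2_fst: "fst \<in> polys2 1"
  using polys2_monom2[of "(1, 0)"] by (simp add: monom2_def[abs_def])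

lemma polys2_snd: "snd \<in> polys2 1"
  using polys2_monom2[of "(0, 1)"] by (simp add: monom2_def[abs_def])

lemma polys2_scale: "u \<in> polys2 n \<Longrightarrow> (\<lambda>z. k * u z) \<in> polys2 n"
  using polys2_lincomb[of u n u k 0] by simp

lemma polys2_mult:
  assumes "u \<in> polys2 m" "v \<in> polys2 k"
  shows "(\<lambda>z. u z * v z) \<in> polys2 (m + k)"
proof -
  obtain c d where c: "\<And>z. u z = (\<Sum>p\<in>exps m. c p * monom2 p z)"
    and d: "\<And>z. v z = (\<Sum>p\<in>exps k. d p * monom2 p z)"
    using assms by (metis mem_polys2_iff)
  let ?S = "exps m \<times> exps k"
  let ?g = "\<lambda>(p, q). (fst p + fst q, snd p + snd q)"
  define e where "e r = (\<Sum>pq\<in>{x \<in> ?S. ?g x = r}. c (fst pq) * d (snd pq))" for r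
  have img: "?g ` ?S \<subseteq> exps (m + k)" by (auto simp: exps_def)
  have "u z * v z = (\<Sum>r\<in>exps (m + k). e r * monom2 r z)" for z
  proof -
    have "u z * v z = (\<Sum>pq\<in>?S. c (fst pq) * d (snd pq) * monom2 (?g pq) z)"
      unfolding c d sum_product sum.cartesian_product
      by (intro sum.cong) (auto simp: monom2_def power_add algebra_simps)
    also have "\<dots> = (\<Sum>r\<in>exps (m + k). \<Sum>pq\<in>{x \<in> ?S. ?g x = r}. c (fst pq) * d (snd pq) * monom2 (?g pq) z)"
      by (rule sum.group[symmetric]) (use img in auto)
    also have "\<dots> = (\<Sum>r\<in>exps (m + k). e r * monom2 r z)"
      unfolding e_def sum_distrib_right by (intro sum.cong refl) auto
    finally show ?thesis .
  qed
  then show ?thesis unfolding mem_polys2_iff by blast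
qed

lemma polys2_sum:
  "finite A \<Longrightarrow> (\<And>a. a \<in> A \<Longrightarrow> f a \<in> polys2 n) \<Longrightarrow> (\<lambda>z. \<Sum>a\<in>A. f a z) \<in> polys2 n"
proof (induction A rule: finite_induct)
  case (insert x F)
  then show ?case using polys2_lincomb[of "f x" n "\<lambda>z. \<Sum>a\<in>F. f a z" 1 1] by simp
qed (simp add: polys2_const)

lemma polys2_power: "u \<in> polys2 m \<Longrightarrow> (\<lambda>z. u z ^ k) \<in> polys2 (m * k)"
  by (induction k) (auto simp: polys2_const dest: polys2_mult)

lemma polys2_compose_affine:
  assumes "u \<in> polys2 n" "f \<in> polys2 1" "g \<in> polys2 1"
  shows "(\<lambda>z. u (f z, g z)) \<in> polys2 n"
proof -
  obtain c where c: "u = (\<lambda>z. \<Sum>p\<in>exps n. c p * monom2 p z)"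
    using assms(1) by (auto simp: mem_polys2_iff)
  have "(\<lambda>z. f z ^ fst p * g z ^ snd p) \<in> polys2 n" if "p \<in> exps n" for p
    using polys2_mult[OF polys2_power[OF assms(2)] polys2_power[OF assms(3)], of "fst p" "snd p"]
      that by (auto simp: exps_def elim: polys2_mono)
  then show ?thesis
    unfolding c monom2_def by (auto intro!: polys2_sum polys2_scale)
qed

lemma continuous_on_polys2: "u \<in> polys2 n \<Longrightarrow> continuous_on S u"
  by (auto simp: mem_polys2_iff monom2_def intro!: continuous_intros)

lemma polys2_zero: "u \<in> polys2 0 \<Longrightarrow> u = (\<lambda>z. u (0, 0))"
  by (auto simp: mem_polys2_iff exps_def monom2_def)

lemma poly_coeffs_zero_if_infinite_roots:
  fixes c :: "nat \<Rightarrow> real"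
  assumes "infinite S" "\<And>t. t \<in> S \<Longrightarrow> (\<Sum>i\<le>n. c i * t ^ i) = 0"
  shows "\<forall>i\<le>n. c i = 0"
proof -
  have "S \<subseteq> {t. (\<Sum>i\<le>n. c i * t ^ i) = 0}" using assms(2) by auto
  then have "infinite {t. (\<Sum>i\<le>n. c i * t ^ i) = 0}" using assms(1) finite_subset by blast
  then show ?thesis using polyfun_finite_roots[of c n] by auto
qed

lemma polys2_coeffs:
  assumes "u \<in> polys2 n"
  obtains c where "\<And>x y. u (x, y) = (\<Sum>i\<le>n. (\<Sum>j\<le>n - i. c i j * y ^ j) * x ^ i)"
proof -
  from assms obtain c where c: "\<And>x y. u (x, y) = (\<Sum>i\<le>n. \<Sum>j\<le>n - i. c i j * x ^ i * y ^ j)"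
    unfolding polys2_def by blast
  show ?thesis
    by (rule that[of c]) (simp add: c sum_distrib_left sum_distrib_right algebra_simps)
qed

lemma polys2_zero_on_x_axis:
  assumes "u \<in> polys2 n" "infinite S" "\<And>t. t \<in> S \<Longrightarrow> u (t, 0) = 0"
  shows "u (t, 0) = 0"
proof -
  obtain c where c: "\<And>x y. u (x, y) = (\<Sum>i\<le>n. (\<Sum>j\<le>n - i. c i j * y ^ j) * x ^ i)"
    using polys2_coeffs[OF assms(1)] by blast
  define b where "b i = (\<Sum>j\<le>n - i. c i j * 0 ^ j)" for i
  have b: "u (x, 0) = (\<Sum>i\<le>n. b i * x ^ i)" for x
    by (simp only: c b_def)
  have "\<forall>i\<le>n. b i = 0"
    by (rule poly_coeffs_zero_if_infinite_roots[OF assms(2)]) (simp only: assms(3) flip: b)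
  then show ?thesis by (simp add: b)
qed

lemma polys2_zero_if_zero_on_square:
  assumes "u \<in> polys2 n" "infinite S" "\<And>x y. x \<in> S \<Longrightarrow> y \<in> S \<Longrightarrow> u (x, y) = 0"
  shows "u = (\<lambda>z. 0)"
proof -
  obtain c where c: "\<And>x y. u (x, y) = (\<Sum>i\<le>n. (\<Sum>j\<le>n - i. c i j * y ^ j) * x ^ i)"
    using polys2_coeffs[OF assms(1)] by blast
  have inner_zero: "\<forall>i\<le>n. (\<Sum>j\<le>n - i. c i j * y ^ j) = 0" if "y \<in> S" for y
  proof (rule poly_coeffs_zero_if_infinite_roots[OF assms(2)])
    show "(\<Sum>i\<le>n. (\<Sum>j\<le>n - i. c i j * y ^ j) * x ^ i) = 0" if "x \<in> S" for x
      using assms(3)[OF \<open>x \<in> S\<close> \<open>y \<in> S\<close>] by (simp only: c)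
  qed
  have "c i j = 0" if "i \<le> n" "j \<le> n - i" for i j
  proof -
    have "\<forall>j\<le>n - i. c i j = 0"
      by (rule poly_coeffs_zero_if_infinite_roots[OF assms(2)]) (use inner_zero that in blast)
    then show ?thesis using that by blast
  qed
  then show ?thesis
    unfolding fun_eq_iff split_paired_All by (simp add: c)
qed

text \<open>Division by \<open>x - \<sigma>(x, y)\<close>, using \<open>x\<^sup>i - \<sigma>\<^sup>i = (x - \<sigma>) \<Sum>\<^sub>k<\<^sub>i \<sigma>\<^sup>i\<^sup>-\<^sup>1\<^sup>-\<^sup>k x\<^sup>k\<close>.\<close>

lemma polys2_remainder_fst:
  assumes "u \<in> polys2 n" "\<sigma> \<in> polys2 1"
  obtains R where "R \<in> polys2 (n - 1)" "\<And>z. u z = u (\<sigma> z, snd z) + (fst z - \<sigma> z) * R z"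
proof -
  obtain c where c: "\<And>z. u z = (\<Sum>p\<in>exps n. c p * monom2 p z)"
    using assms by (metis mem_polys2_iff)
  define R where "R z = (\<Sum>p\<in>exps n. \<Sum>k<fst p.
      c p * (\<sigma> z ^ (fst p - Suc k) * fst z ^ k) * snd z ^ snd p)" for z
  have "R \<in> polys2 (n - 1)"
    unfolding R_def[abs_def]
  proof (intro polys2_sum finite_exps finite_lessThan)
    fix p k assume p: "p \<in> exps n" and k: "k \<in> {..<fst p}"
    have "(\<lambda>z. \<sigma> z ^ (fst p - Suc k) * fst z ^ k * snd z ^ snd p)
        \<in> polys2 (1 * (fst p - Suc k) + 1 * k + 1 * snd p)"
      by (intro polys2_mult polys2_power polys2_fst polys2_snd assms(2))
    then have "(\<lambda>z. \<sigma> z ^ (fst p - Suc k) * fst z ^ k * snd z ^ snd p) \<in> polys2 (n - 1)"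
      by (rule polys2_mono) (use p k in \<open>auto simp: exps_def\<close>)
    then show "(\<lambda>z. c p * (\<sigma> z ^ (fst p - Suc k) * fst z ^ k) * snd z ^ snd p) \<in> polys2 (n - 1)"
      using polys2_scale[of _ "n - 1" "c p"] by (simp add: mult.assoc)
  qed
  moreover have "u z = u (\<sigma> z, snd z) + (fst z - \<sigma> z) * R z" for z
  proof -
    have pow: "fst z ^ i = \<sigma> z ^ i + (fst z - \<sigma> z) * (\<Sum>k<i. \<sigma> z ^ (i - Suc k) * fst z ^ k)" for i
      using power_diff_sumr2[of "fst z" i "\<sigma> z"] by simp
    have "u z = (\<Sum>p\<in>exps n. c p * (\<sigma> z ^ fst p
        + (fst z - \<sigma> z) * (\<Sum>k<fst p. \<sigma> z ^ (fst p - Suc k) * fst z ^ k)) * snd z ^ snd p)"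
      unfolding c monom2_def by (intro sum.cong refl, subst pow[of "fst _"]) (simp add: mult.assoc)
    also have "\<dots> = (\<Sum>p\<in>exps n. c p * \<sigma> z ^ fst p * snd z ^ snd p)
        + (\<Sum>p\<in>exps n. (fst z - \<sigma> z)
            * (\<Sum>k<fst p. c p * (\<sigma> z ^ (fst p - Suc k) * fst z ^ k) * snd z ^ snd p))"
      unfolding sum.distrib[symmetric]
      by (intro sum.cong refl)
        (simp add: sum_distrib_left sum_distrib_right distrib_left distrib_right mult.assoc
          mult.left_commute)
    also have "\<dots> = u (\<sigma> z, snd z) + (fst z - \<sigma> z) * R z"
      unfolding c monom2_def R_def by (simp add: sum_distrib_left mult.assoc)
    finally show ?thesis .
  qed
  ultimately show ?thesis using that by blast
qed

section \<open>Edges of the reference triangle\<close>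

fun edge_bary :: "edge \<Rightarrow> real \<times> real \<Rightarrow> real" where
  "edge_bary EI z = snd z"
| "edge_bary EII z = fst z"
| "edge_bary EIII z = 1 - fst z - snd z"

lemma polys2_one_minus: "f \<in> polys2 n \<Longrightarrow> (\<lambda>z. 1 - f z) \<in> polys2 n"
  using polys2_lincomb[OF polys2_const, of f n 1 1 "-1"] by simp

lemma polys2_edge_bary: "edge_bary Z \<in> polys2 1"
proof (cases Z)
  case EIII
  have "(\<lambda>z. 1 * (1 - snd z) + (-1) * fst z) \<in> polys2 1"
    by (intro polys2_lincomb polys2_one_minus polys2_snd polys2_fst)
  moreover have "edge_bary Z = (\<lambda>z. 1 * (1 - snd z) + (-1) * fst z)"
    using EIII by (simp add: fun_eq_iff)
  ultimately show ?thesis by simp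
next
  case EI
  have "edge_bary Z = snd" using EI by (simp add: fun_eq_iff)
  then show ?thesis using polys2_snd by simp
next
  case EII
  have "edge_bary Z = fst" using EII by (simp add: fun_eq_iff)
  then show ?thesis using polys2_fst by simp
qed

lemma edge_bary_nonneg: "z \<in> Tref \<Longrightarrow> 0 \<le> edge_bary Z z"
  by (cases Z) (auto simp: Tref_def)

lemma edge_bary_pos: "0 < x \<Longrightarrow> 0 < y \<Longrightarrow> x + y < 1 \<Longrightarrow> 0 < edge_bary Z (x, y)"
  by (cases Z) auto

lemma restr_minus_edge_bary_mult: "restr Z (\<lambda>z. u z - edge_bary Z z * q z) t = restr Z u t"
  by (cases Z) auto

lemma polys2_restr_fst: "u \<in> polys2 n \<Longrightarrow> (\<lambda>z. restr Z u (fst z)) \<in> polys2 n"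
  by (cases Z) (auto intro!: polys2_compose_affine polys2_fst polys2_const polys2_one_minus)

lemma restr_eq_zero:
  assumes "u \<in> polys2 n" "\<forall>t\<in>{0..1}. restr Z u t = 0"
  shows "restr Z u t = 0"
  using polys2_zero_on_x_axis[OF polys2_restr_fst[OF assms(1)], of "{0..1}"] assms(2) by simp

lemma polys2_edge_factor:
  assumes "d \<in> polys2 n" "\<And>t. restr Z d t = 0"
  obtains R where "R \<in> polys2 (n - 1)" "\<And>z. d z = edge_bary Z z * R z"
proof (cases Z)
  case EI
  let ?d' = "\<lambda>z. d (snd z, fst z)"
  have d': "?d' \<in> polys2 n" using polys2_compose_affine[OF assms(1) polys2_snd polys2_fst] by simp
  obtain R where R: "R \<in> polys2 (n - 1)" "\<And>z. d (snd z, fst z) = d (snd z, 0) + fst z * R z"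
    using polys2_remainder_fst[OF d' polys2_const[of 0]] by auto
  have "d z = edge_bary Z z * R (snd z, fst z)" for z
    using R(2)[of "(snd z, fst z)"] assms(2)[of "fst z"] EI by simp
  moreover have "(\<lambda>z. R (snd z, fst z)) \<in> polys2 (n - 1)"
    using polys2_compose_affine[OF R(1) polys2_snd polys2_fst] by simp
  ultimately show ?thesis using that by blast
next
  case EII
  obtain R where R: "R \<in> polys2 (n - 1)" "\<And>z. d z = d (0, snd z) + fst z * R z"
    using polys2_remainder_fst[OF assms(1) polys2_const[of 0]] by auto
  have "d z = edge_bary Z z * R z" for z
    using R(2)[of z] assms(2)[of "snd z"] EII by simp
  then show ?thesis using that R(1) by blast
next
  case EIII
  obtain R where R: "R \<in> polys2 (n - 1)"
      "\<And>z. d z = d (1 - snd z, snd z) + (fst z - (1 - snd z)) * R z"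
    using polys2_remainder_fst[OF assms(1) polys2_one_minus[OF polys2_snd]] by auto
  have "d z = edge_bary Z z * (- R z)" for z
    using R(2)[of z] assms(2)[of "snd z"] EIII by (simp add: algebra_simps)
  moreover have "(\<lambda>z. - R z) \<in> polys2 (n - 1)" using polys2_scale[OF R(1), of "-1"] by simp
  ultimately show ?thesis using that by blast
qed

lemma polys2_of_polys1:
  assumes "v \<in> polys1 n"
  shows "(\<lambda>z. v (fst z)) \<in> polys2 n"
proof -
  obtain a where a: "\<And>t. v t = (\<Sum>k\<le>n. a k * t ^ k)" using assms unfolding polys1_def by blast
  have "(\<lambda>z. fst z ^ k) \<in> polys2 n" if "k \<le> n" for k
    using polys2_mono[OF polys2_power[OF polys2_fst, of k]] that by simp
  then show ?thesis
    unfolding a by (auto intro!: polys2_sum polys2_scale)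
qed

section \<open>Integration over the reference triangle\<close>

lemma compact_Tref: "compact Tref"
proof -
  have "closed Tref" unfolding Tref_def
    by (intro closed_Collect_conj closed_Collect_le continuous_intros)
  moreover have "bounded Tref"
    by (rule bounded_subset[OF bounded_cbox[of "(0, 0)" "(1, 1)"]]) (auto simp: Tref_def cbox_Pair_eq)
  ultimately show ?thesis using compact_eq_bounded_closed by blast
qed

lemma integrable_on_Tref:
  fixes f :: "real \<times> real \<Rightarrow> real"
  assumes "continuous_on Tref f"
  shows "f integrable_on Tref"
  using set_borel_integral_eq_integral(1)[of Tref f] borel_integrable_compact[OF compact_Tref assms]
  by (simp add: set_integrable_def)

lemma integral_Tref_mult_lincomb:
  fixes p g h :: "real \<times> real \<Rightarrow> real"
  assumes "continuous_on Tref p" "continuous_on Tref g" "continuous_on Tref h"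
  shows "integral Tref (\<lambda>z. p z * (\<alpha> * g z + \<beta> * h z))
    = \<alpha> * integral Tref (\<lambda>z. p z * g z) + \<beta> * integral Tref (\<lambda>z. p z * h z)"
proof -
  have "(\<lambda>z. p z * g z) integrable_on Tref" "(\<lambda>z. p z * h z) integrable_on Tref"
    using assms by (auto intro!: integrable_on_Tref continuous_on_mult)
  then have "integral Tref (\<lambda>z. \<alpha> * (p z * g z) + \<beta> * (p z * h z))
      = integral Tref (\<lambda>z. \<alpha> * (p z * g z)) + integral Tref (\<lambda>z. \<beta> * (p z * h z))"
    by (intro integral_add integrable_cmul[where 'b=real, simplified])
  then show ?thesis by (simp add: distrib_left mult.left_commute)
qed

lemma integral_Tref_eq_0_imp_zero_on_square:
  fixes f :: "real \<times> real \<Rightarrow> real"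
  assumes cont: "continuous_on UNIV f" and nonneg: "\<And>z. z \<in> Tref \<Longrightarrow> 0 \<le> f z"
    and int0: "integral Tref f = 0"
    and "x \<in> {0<..<1/2}" "y \<in> {0<..<1/2}"
  shows "f (x, y) = 0"
proof -
  let ?B = "cbox (0::real, 0::real) (1/2, 1/2)"
  have B_sub: "?B \<subseteq> Tref" by (auto simp: Tref_def cbox_Pair_eq)
  have iB: "f integrable_on ?B" using integrable_continuous continuous_on_subset[OF cont] by blast
  have "integral ?B f \<le> integral Tref f"
    using integral_subset_le[OF B_sub iB integrable_on_Tref] continuous_on_subset[OF cont] nonneg
    by blast
  moreover have "0 \<le> integral ?B f"
    using integral_nonneg[OF iB] nonneg B_sub by blast
  ultimately have "(f has_integral 0) ?B" using int0 iB by (metis has_integral_integral order.antisym)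
  show ?thesis
  proof (rule has_integral_0_cbox_imp_0[OF continuous_on_subset[OF cont] _ \<open>(f has_integral 0) ?B\<close>])
    show "\<And>z. z \<in> box (0, 0) (1/2, 1/2) \<Longrightarrow> 0 \<le> f z"
      using nonneg B_sub box_subset_cbox by blast
    show "box (0::real, 0::real) (1/2, 1/2) \<noteq> {}" by (auto simp: box_ne_empty Basis_prod_def)
    show "(x, y) \<in> ?B" using assms(4,5) by (auto simp: cbox_Pair_eq)
  qed auto
qed

definition edge_form :: "edge \<Rightarrow> (real \<times> real \<Rightarrow> real) \<Rightarrow> (real \<times> real \<Rightarrow> real) \<Rightarrow> real" where
  "edge_form Z g k = integral Tref (\<lambda>z. edge_bary Z z * g z * k z)"

lemma edge_form_eq_0_imp_zero:
  assumes R: "R \<in> polys2 m" and "edge_form Z R R = 0"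
  shows "R = (\<lambda>z. 0)"
proof (rule polys2_zero_if_zero_on_square[OF R])
  let ?f = "\<lambda>z. edge_bary Z z * R z * R z"
  have cont: "continuous_on UNIV ?f"
    by (intro continuous_on_mult continuous_on_polys2[OF R] continuous_on_polys2[OF polys2_edge_bary])
  have nonneg: "0 \<le> ?f z" if "z \<in> Tref" for z
    using edge_bary_nonneg[OF that, of Z] by (simp add: mult.assoc)
  fix x y :: real assume xy: "x \<in> {0<..<1/2}" "y \<in> {0<..<1/2}"
  then have "?f (x, y) = 0"
    using integral_Tref_eq_0_imp_zero_on_square[OF cont nonneg] assms(2) by (simp add: edge_form_def)
  moreover have "edge_bary Z (x, y) \<noteq> 0" using edge_bary_pos[of x y Z] xy by simp
  ultimately show "R (x, y) = 0" by simp
qed simp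

lemma anisotropic_form_edge_form: "anisotropic_form (polys2 m) (edge_form Z)"
proof
  fix g h k :: "real \<times> real \<Rightarrow> real" and \<alpha> \<beta> :: real
  assume polys: "g \<in> polys2 m" "h \<in> polys2 m" "k \<in> polys2 m"
  have cont: "continuous_on Tref g" "continuous_on Tref h" "continuous_on Tref (\<lambda>z. edge_bary Z z * k z)"
    using polys by (auto intro!: continuous_on_mult continuous_on_polys2[OF polys2_edge_bary]
        intro: continuous_on_polys2)
  have "edge_form Z (\<lambda>z. \<alpha> * g z + \<beta> * h z) k
      = integral Tref (\<lambda>z. (edge_bary Z z * k z) * (\<alpha> * g z + \<beta> * h z))"
    by (simp add: edge_form_def mult_ac)
  also have "\<dots> = \<alpha> * edge_form Z g k + \<beta> * edge_form Z h k"
    unfolding integral_Tref_mult_lincomb[OF cont(3,1,2)] by (simp add: edge_form_def mult_ac)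
  finally show "edge_form Z (\<lambda>z. \<alpha> * g z + \<beta> * h z) k = \<alpha> * edge_form Z g k + \<beta> * edge_form Z h k" .
qed (auto simp: polys2_const polys2_lincomb edge_form_def mult_ac intro: edge_form_eq_0_imp_zero)

lemma edge_form_representer_exists:
  assumes cont_p: "continuous_on Tref p"
  shows "\<exists>q\<in>polys2 m. \<forall>w\<in>polys2 m. edge_form Z q w = integral Tref (\<lambda>z. p z * w z)"
proof -
  interpret anisotropic_form "polys2 m" "edge_form Z"
    by (rule anisotropic_form_edge_form)
  have "\<exists>q\<in>lin_span monom2 (exps m). \<forall>w\<in>lin_span monom2 (exps m).
      edge_form Z q w = integral Tref (\<lambda>z. p z * w z)"
  proof (rule representer_exists)
    show "monom2 ` exps m \<subseteq> polys2 m"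
      by (auto simp: exps_def intro: polys2_mono[OF polys2_monom2])
    show "integral Tref (\<lambda>z. p z * (\<alpha> * g z + \<beta> * h z))
        = \<alpha> * integral Tref (\<lambda>z. p z * g z) + \<beta> * integral Tref (\<lambda>z. p z * h z)"
      if "g \<in> polys2 m" "h \<in> polys2 m" for g h \<alpha> \<beta>
      using that by (intro integral_Tref_mult_lincomb cont_p continuous_on_polys2)
  qed simp
  then show ?thesis unfolding polys2_eq_lin_span .
qed

section \<open>Extension from an edge\<close>

lemma polys2_extension:
  assumes "v \<in> polys1 n"
  shows "\<exists>p\<in>polys2 n. \<forall>t. restr Z p t = v t"
proof -
  have p1: "(\<lambda>z. v (fst z)) \<in> polys2 n" by (rule polys2_of_polys1[OF assms])
  have p2: "(\<lambda>z. v (snd z)) \<in> polys2 n"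
    using polys2_compose_affine[OF p1 polys2_snd polys2_fst] by simp
  show ?thesis
    by (cases Z) (auto intro: bexI[OF _ p1] bexI[OF _ p2])
qed

lemma orth_polys_restr_inj:
  assumes u1: "u1 \<in> orth_polys n" and u2: "u2 \<in> orth_polys n"
    and restr_eq: "\<forall>t\<in>{0..1}. restr Z u1 t = restr Z u2 t"
  shows "u1 = u2"
proof (cases "n = 0")
  case True
  then have "u1 = (\<lambda>z. u1 (0, 0))" "u2 = (\<lambda>z. u2 (0, 0))"
    using u1 u2 polys2_zero by (auto simp: orth_polys_def)
  moreover have "restr Z u1 0 = restr Z u2 0" using restr_eq by simp
  ultimately show ?thesis by (cases Z) (metis restr.simps)+
next
  case False
  then have P: "u1 \<in> polys2 n" "u2 \<in> polys2 n"
    and orth: "\<And>w. w \<in> polys2 (n - 1) \<Longrightarrow> integral Tref (\<lambda>z. u1 z * w z) = 0"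
      "\<And>w. w \<in> polys2 (n - 1) \<Longrightarrow> integral Tref (\<lambda>z. u2 z * w z) = 0"
    using u1 u2 by (auto simp: orth_polys_def)
  define d where "d z = u1 z - u2 z" for z
  have d: "d \<in> polys2 n" using polys2_lincomb[OF P, of 1 "-1"] by (simp add: d_def[abs_def])
  have "restr Z d t = 0" if "t \<in> {0..1}" for t
    using restr_eq that by (cases Z) (auto simp: d_def)
  then obtain R where R: "R \<in> polys2 (n - 1)" "\<And>z. d z = edge_bary Z z * R z"
    using polys2_edge_factor[OF d restr_eq_zero[OF d]] by blast
  have "edge_form Z R R = integral Tref (\<lambda>z. R z * (1 * u1 z + (-1) * u2 z))"
  proof -
    have eq: "edge_bary Z z * R z * R z = R z * (1 * u1 z + (-1) * u2 z)" for z
      using R(2)[of z] by (simp add: d_def algebra_simps)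
    show ?thesis unfolding edge_form_def by (simp only: eq)
  qed
  also have "\<dots> = 1 * integral Tref (\<lambda>z. R z * u1 z) + (-1) * integral Tref (\<lambda>z. R z * u2 z)"
    by (intro integral_Tref_mult_lincomb continuous_on_polys2[OF R(1)] continuous_on_polys2[OF P(1)]
        continuous_on_polys2[OF P(2)])
  also have "\<dots> = 0"
    using orth[OF R(1)] by (simp add: mult.commute)
  finally have "R = (\<lambda>z. 0)" using edge_form_eq_0_imp_zero[OF R(1)] by blast
  then show ?thesis using R(2) by (auto simp: d_def fun_eq_iff)
qed

lemma orth_polys_extension_exists:
  assumes "v \<in> polys1 n"
  shows "\<exists>u\<in>orth_polys n. \<forall>t. restr Z u t = v t"
proof -
  obtain p where p: "p \<in> polys2 n" "\<And>t. restr Z p t = v t"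
    using polys2_extension[OF assms] by blast
  show ?thesis
  proof (cases "n = 0")
    case True
    then show ?thesis using p by (auto simp: orth_polys_def)
  next
    case False
    have cont_p: "continuous_on Tref p" using continuous_on_polys2[OF p(1)] .
    obtain q where q: "q \<in> polys2 (n - 1)"
      and represents: "\<And>w. w \<in> polys2 (n - 1) \<Longrightarrow> edge_form Z q w = integral Tref (\<lambda>z. p z * w z)"
      using edge_form_representer_exists[OF cont_p] by blast
    define u where "u z = p z - edge_bary Z z * q z" for z
    have "(\<lambda>z. edge_bary Z z * q z) \<in> polys2 n"
      using polys2_mult[OF polys2_edge_bary q] False by simp
    then have u_poly: "u \<in> polys2 n"
      using polys2_lincomb[OF p(1), of _ 1 "-1"] by (simp add: u_def[abs_def])
    have "integral Tref (\<lambda>z. u z * w z) = 0" if w: "w \<in> polys2 (n - 1)" for w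
    proof -
      have "integral Tref (\<lambda>z. u z * w z)
          = integral Tref (\<lambda>z. w z * (1 * p z + (-1) * (edge_bary Z z * q z)))"
        by (simp add: u_def algebra_simps)
      also have "\<dots> = integral Tref (\<lambda>z. p z * w z) - edge_form Z q w"
        by (subst integral_Tref_mult_lincomb)
          (auto simp: edge_form_def mult_ac intro!: continuous_on_polys2[OF w] cont_p
            continuous_on_mult continuous_on_polys2[OF q] continuous_on_polys2[OF polys2_edge_bary])
      finally show ?thesis using represents[OF w] by simp
    qed
    then have "u \<in> orth_polys n" using u_poly False by (simp add: orth_polys_def)
    moreover have "restr Z u t = v t" for t
      using p(2)[of t] by (simp add: u_def[abs_def] restr_minus_edge_bary_mult)
    ultimately show ?thesis by blast
  qed
qed

theorem lemma13:
  fixes n :: nat and v :: "real \<Rightarrow> real" and Z :: edge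
  assumes "v \<in> polys1 n"
  shows "\<exists>!u. u \<in> orth_polys n \<and> (\<forall>t\<in>{0..1}. v t = restr Z u t)"
proof -
  obtain u where u: "u \<in> orth_polys n" "\<And>t. restr Z u t = v t"
    using orth_polys_extension_exists[OF assms] by blast
  show ?thesis
  proof (rule ex1I)
    show "u \<in> orth_polys n \<and> (\<forall>t\<in>{0..1}. v t = restr Z u t)" using u by simp
  next
    fix u' assume "u' \<in> orth_polys n \<and> (\<forall>t\<in>{0..1}. v t = restr Z u' t)"
    then show "u' = u" using orth_polys_restr_inj[of u' n u Z] u by simp
  qed
qed

end
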